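(* Let $n\ge1$ and $\vec p,\vec q\in[0,1]^n$ with $p_i\ge q_i$ for all $i$. Let $X=S_{\vec p}$ be a sum of $n$ independent $\mathrm{Ber}(p_i)$ random variables and $Y=S_{\vec q}$ a sum of $n$ independent $\mathrm{Ber}(q_i)$ random variables. Let $\sigma_{\vec p}^2=\mathrm{Var}(X)=\sum_ip_i(1-p_i)$, $m_{\vec p}=\mathbb E X$, $\Delta=\sum_{i=1}^n(p_i-q_i)$, $g(k)=\mathbb P(X\ge k)-\mathbb P(Y\ge k)$ for $k\in\mathbb Z$, and $J=\sum_{k\in\mathbb Z}(k-m_{\vec p})^2g(k)$. Then $$J\le2\Delta\big(\sigma_{\vec p}^2+1+\Delta^2\big).$$ *)

theory Defs
  imports "HOL-Probability.Probability"
begin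

definition bern_sum_pmf :: "nat \<Rightarrow> (nat \<Rightarrow> real) \<Rightarrow> int pmf" where
  "bern_sum_pmf n p =
     map_pmf (\<lambda>f. int (card {i\<in>{..<n}. f i})) (Pi_pmf {..<n} False (\<lambda>i. bernoulli_pmf (p i)))"

end

theory Submission
  imports Defs
begin

text \<open>Summation by parts gives \<open>J = E S(X - m) - E S(Y - m)\<close>, where
  \<open>S y = y^3/3 + y^2/2 + y/6\<close> is the antidifference of \<open>y^2\<close> (so \<open>S j = 1^2 + ... + j^2\<close>).
  Hence \<open>J\<close> only depends on the first three central moments of \<open>X\<close> and \<open>Y\<close> about \<open>m\<close>,
  i.e. on the means, variances and third cumulants, which are sums of the Bernoulli ones.
  Coordinatewise, the variance and the third cumulant \<open>p(1 - p)(1 - 2p)\<close> of a Bernoulli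
  variable change by at most \<open>p - q\<close> when passing from \<open>p\<close> to \<open>q \<le> p\<close>, and the mean
  changes by \<open>\<Delta>\<close>; inserting these bounds gives the estimate.\<close>

lemma bern_sum_pmf_0 [simp]: "bern_sum_pmf 0 p = return_pmf 0"
  by (simp add: bern_sum_pmf_def)

lemma bern_sum_pmf_Suc:
  "bern_sum_pmf (Suc n) p =
     bernoulli_pmf (p n) \<bind> (\<lambda>b. map_pmf (\<lambda>x. x + of_bool b) (bern_sum_pmf n p))"
proof -
  let ?B = "Pi_pmf {..<n} False (\<lambda>i. bernoulli_pmf (p i))"
  have succ_card: "int (card {i\<in>{..<Suc n}. (f(n := b)) i}) = int (card {i\<in>{..<n}. f i}) + of_bool b"
    for f :: "nat \<Rightarrow> bool" and b
  proof -
    have "{i\<in>{..<Suc n}. (f(n := b)) i} = (if b then insert n {i\<in>{..<n}. f i} else {i\<in>{..<n}. f i})"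
      by auto
    then show ?thesis by auto
  qed
  have "{..<Suc n} = insert n {..<n}" by auto
  then have "bern_sum_pmf (Suc n) p = map_pmf (\<lambda>f. int (card {i\<in>{..<Suc n}. f i}))
      (bernoulli_pmf (p n) \<bind> (\<lambda>b. ?B \<bind> (\<lambda>f. return_pmf (f(n := b)))))"
    unfolding bern_sum_pmf_def by (simp add: Pi_pmf_insert')
  also have "\<dots> = bernoulli_pmf (p n) \<bind>
      (\<lambda>b. map_pmf (\<lambda>f. int (card {i\<in>{..<Suc n}. (f(n := b)) i})) ?B)"
    by (simp add: map_bind_pmf map_pmf_def bind_assoc_pmf bind_return_pmf)
  also have "\<dots> = bernoulli_pmf (p n) \<bind> (\<lambda>b. map_pmf (\<lambda>x. x + of_bool b) (bern_sum_pmf n p))"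
    unfolding bern_sum_pmf_def pmf.map_comp o_def succ_card ..
  finally show ?thesis .
qed

lemma set_pmf_bern_sum_pmf: "set_pmf (bern_sum_pmf n p) \<subseteq> {0..int n}"
proof
  fix x assume "x \<in> set_pmf (bern_sum_pmf n p)"
  then obtain f where x: "x = int (card {i\<in>{..<n}. f i})"
    unfolding bern_sum_pmf_def by auto
  have "card {i\<in>{..<n}. f i} \<le> n"
    using card_mono[of "{..<n}" "{i\<in>{..<n}. f i}"] by auto
  then show "x \<in> {0..int n}" using x by simp
qed

lemma finite_set_pmf_bern_sum_pmf [simp]: "finite (set_pmf (bern_sum_pmf n p))"
  using set_pmf_bern_sum_pmf finite_subset by blast

lemma expectation_bern_sum_pmf_Suc:
  fixes h :: "int \<Rightarrow> real"
  assumes "0 \<le> p n" "p n \<le> 1"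
  shows "measure_pmf.expectation (bern_sum_pmf (Suc n) p) h =
     p n * measure_pmf.expectation (bern_sum_pmf n p) (\<lambda>x. h (x + 1)) +
     (1 - p n) * measure_pmf.expectation (bern_sum_pmf n p) h"
  unfolding bern_sum_pmf_Suc
  by (subst pmf_expectation_bind[of UNIV]) (use assms in \<open>auto simp: UNIV_bool\<close>)

lemma expectation_bern_sum_pmf_shift:
  assumes "\<And>i. i < n \<Longrightarrow> 0 \<le> p i \<and> p i \<le> 1"
  shows "measure_pmf.expectation (bern_sum_pmf n p) (\<lambda>x. real_of_int x - c) = (\<Sum>i<n. p i) - c"
  using assms
proof (induction n arbitrary: c)
  case (Suc n)
  have shift: "(\<lambda>x. real_of_int (x + 1) - c) = (\<lambda>x. real_of_int x - (c - 1))"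
    by auto
  show ?case
    using Suc.prems
    by (simp add: expectation_bern_sum_pmf_Suc shift Suc.IH del: of_int_add)
      (simp add: algebra_simps)
qed simp

lemma expectation_bern_sum_pmf_shift_sq:
  assumes "\<And>i. i < n \<Longrightarrow> 0 \<le> p i \<and> p i \<le> 1"
  shows "measure_pmf.expectation (bern_sum_pmf n p) (\<lambda>x. (real_of_int x - c)^2) =
     (\<Sum>i<n. p i * (1 - p i)) + ((\<Sum>i<n. p i) - c)^2"
  using assms
proof (induction n arbitrary: c)
  case (Suc n)
  have shift: "(\<lambda>x. (real_of_int (x + 1) - c)^2) = (\<lambda>x. (real_of_int x - (c - 1))^2)"
    by (simp add: algebra_simps)
  show ?case
    using Suc.prems
    by (simp add: expectation_bern_sum_pmf_Suc shift Suc.IH del: of_int_add)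
      (simp add: algebra_simps power2_eq_square)
qed simp

lemma expectation_bern_sum_pmf_shift_cube:
  assumes "\<And>i. i < n \<Longrightarrow> 0 \<le> p i \<and> p i \<le> 1"
  shows "measure_pmf.expectation (bern_sum_pmf n p) (\<lambda>x. (real_of_int x - c)^3) =
     (\<Sum>i<n. p i * (1 - p i) * (1 - 2 * p i))
     + 3 * (\<Sum>i<n. p i * (1 - p i)) * ((\<Sum>i<n. p i) - c) + ((\<Sum>i<n. p i) - c)^3"
  using assms
proof (induction n arbitrary: c)
  case (Suc n)
  have shift: "(\<lambda>x. (real_of_int (x + 1) - c)^3) = (\<lambda>x. (real_of_int x - (c - 1))^3)"
    by (simp add: algebra_simps)
  show ?case
    using Suc.prems
    by (simp add: expectation_bern_sum_pmf_Suc shift Suc.IH del: of_int_add)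
      (simp add: algebra_simps power3_eq_cube)
qed simp

lemma prob_bern_sum_pmf_atLeast_nonpos:
  assumes "k \<le> 0"
  shows "measure_pmf.prob (bern_sum_pmf n p) {x. k \<le> x} = 1"
  using assms set_pmf_bern_sum_pmf[of n p]
  by (subst measure_pmf.prob_eq_1) (auto simp: AE_measure_pmf_iff)

lemma prob_bern_sum_pmf_atLeast_gt:
  assumes "int n < k"
  shows "measure_pmf.prob (bern_sum_pmf n p) {x. k \<le> x} = 0"
  using assms set_pmf_bern_sum_pmf[of n p] by (subst measure_pmf_zero_iff) auto

lemma sum_weighted_tail_probs:
  fixes M :: "int pmf" and w :: "int \<Rightarrow> real"
  assumes supp: "set_pmf M \<subseteq> {0..N}"
  shows "(\<Sum>k\<in>{1..N}. w k * measure_pmf.prob M {x. k \<le> x}) =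
    measure_pmf.expectation M (\<lambda>a. \<Sum>k\<in>{1..a}. w k)"
proof -
  have expectation_as_sum: "measure_pmf.expectation M f = (\<Sum>a\<in>{0..N}. f a * pmf M a)"
    for f :: "int \<Rightarrow> real"
    using supp by (intro integral_measure_pmf_real) auto
  have tail_as_sum: "measure_pmf.prob M {x. k \<le> x} = (\<Sum>a\<in>{0..N}. indicator {x. k \<le> x} a * pmf M a)"
    for k
  proof -
    have "measure_pmf.prob M {x. k \<le> x} = measure_pmf.expectation M (indicator {x. k \<le> x})"
      by simp
    then show ?thesis by (simp only: expectation_as_sum)
  qed
  have "(\<Sum>k\<in>{1..N}. w k * measure_pmf.prob M {x. k \<le> x}) =
      (\<Sum>k\<in>{1..N}. \<Sum>a\<in>{0..N}. if k \<le> a then w k * pmf M a else 0)"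
    unfolding tail_as_sum sum_distrib_left by (intro sum.cong refl) (simp add: indicator_def)
  also have "\<dots> = (\<Sum>a\<in>{0..N}. \<Sum>k\<in>{1..N}. if k \<le> a then w k * pmf M a else 0)"
    by (rule sum.swap)
  also have "\<dots> = (\<Sum>a\<in>{0..N}. (\<Sum>k\<in>{1..a}. w k) * pmf M a)"
  proof (intro sum.cong refl)
    fix a assume "a \<in> {0..N}"
    then have "{k\<in>{1..N}. k \<le> a} = {1..a}" by auto
    then show "(\<Sum>k\<in>{1..N}. if k \<le> a then w k * pmf M a else 0) = (\<Sum>k\<in>{1..a}. w k) * pmf M a"
      by (simp add: sum.inter_filter[symmetric] sum_distrib_right)
  qed
  finally show ?thesis by (simp add: expectation_as_sum)
qed

definition sum_squares_poly :: "real \<Rightarrow> real" where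
  "sum_squares_poly y = y^3 / 3 + y^2 / 2 + y / 6"

lemma sum_squares_poly_diff: "sum_squares_poly y - sum_squares_poly (y - 1) = y^2"
  by (simp add: sum_squares_poly_def field_simps power2_eq_square power3_eq_cube)

lemma sum_shifted_squares:
  fixes a :: int and c :: real
  assumes "0 \<le> a"
  shows "(\<Sum>k\<in>{1..a}. (real_of_int k - c)^2) = sum_squares_poly (a - c) - sum_squares_poly (- c)"
  using assms
proof (induction a rule: int_ge_induct)
  case (step a)
  have "{1..a + 1} = insert (a + 1) {1..a}" using step.hyps by auto
  then show ?case
    using step.IH sum_squares_poly_diff[of "a + 1 - c"] by (simp add: algebra_simps)
qed simp

lemma expectation_sum_squares_poly_bern_sum_pmf:
  fixes c :: real
  assumes "\<And>i. i < n \<Longrightarrow> 0 \<le> p i \<and> p i \<le> 1"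
  defines "\<mu> \<equiv> (\<Sum>i<n. p i) - c" and "\<sigma>2 \<equiv> \<Sum>i<n. p i * (1 - p i)"
    and "\<kappa>3 \<equiv> \<Sum>i<n. p i * (1 - p i) * (1 - 2 * p i)"
  shows "measure_pmf.expectation (bern_sum_pmf n p) (\<lambda>x. sum_squares_poly (real_of_int x - c)) =
    (\<kappa>3 + 3 * \<sigma>2 * \<mu> + \<mu>^3) / 3 + (\<sigma>2 + \<mu>^2) / 2 + \<mu> / 6"
proof -
  have linear: "measure_pmf.expectation (bern_sum_pmf n p) (\<lambda>x. g x^3 / 3 + g x^2 / 2 + g x / 6) =
      measure_pmf.expectation (bern_sum_pmf n p) (\<lambda>x. g x^3) / 3
      + measure_pmf.expectation (bern_sum_pmf n p) (\<lambda>x. g x^2) / 2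
      + measure_pmf.expectation (bern_sum_pmf n p) g / 6" for g :: "int \<Rightarrow> real"
    by (simp add: integrable_measure_pmf_finite)
  show ?thesis
    unfolding sum_squares_poly_def linear[of "\<lambda>x. real_of_int x - c"] \<mu>_def \<sigma>2_def \<kappa>3_def
    by (simp only: assms(1) expectation_bern_sum_pmf_shift expectation_bern_sum_pmf_shift_sq
        expectation_bern_sum_pmf_shift_cube)
qed

lemma bern_sum_pmf_weighted_tail_sum:
  "(\<Sum>k\<in>{1..int n}. (real_of_int k - c)^2 * measure_pmf.prob (bern_sum_pmf n p) {x. k \<le> x}) =
    measure_pmf.expectation (bern_sum_pmf n p) (\<lambda>x. sum_squares_poly (real_of_int x - c))
    - sum_squares_poly (- c)"
proof -
  have "(\<Sum>k\<in>{1..int n}. (real_of_int k - c)^2 * measure_pmf.prob (bern_sum_pmf n p) {x. k \<le> x}) =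
      measure_pmf.expectation (bern_sum_pmf n p)
        (\<lambda>x. sum_squares_poly (real_of_int x - c) - sum_squares_poly (- c))"
    unfolding sum_weighted_tail_probs[OF set_pmf_bern_sum_pmf]
  proof (intro integral_cong_AE AE_pmfI)
    fix a assume "a \<in> set_pmf (bern_sum_pmf n p)"
    then have "0 \<le> a" using set_pmf_bern_sum_pmf by fastforce
    then show "(\<Sum>k\<in>{1..a}. (real_of_int k - c)^2) =
        sum_squares_poly (real_of_int a - c) - sum_squares_poly (- c)"
      by (rule sum_shifted_squares)
  qed simp_all
  then show ?thesis
    by (simp add: integrable_measure_pmf_finite)
qed

lemma bernoulli_variance_diff_abs_le:
  fixes p q :: real
  assumes "0 \<le> q" "q \<le> p" "p \<le> 1"
  shows "\<bar>p * (1 - p) - q * (1 - q)\<bar> \<le> p - q"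
proof -
  have "p * (1 - p) - q * (1 - q) = (p - q) * (1 - p - q)" by (simp add: algebra_simps)
  moreover have "\<bar>(p - q) * (1 - p - q)\<bar> \<le> (p - q) * 1"
    unfolding abs_mult using assms by (intro mult_mono) auto
  ultimately show ?thesis by simp
qed

lemma bernoulli_third_cumulant_diff_le:
  fixes p q :: real
  assumes "0 \<le> q" "q \<le> p" "p \<le> 1"
  shows "p * (1 - p) * (1 - 2 * p) - q * (1 - q) * (1 - 2 * q) \<le> p - q"
proof -
  have factor: "p * (1 - p) * (1 - 2 * p) - q * (1 - q) * (1 - 2 * q) =
      (p - q) * (1 - 3 * (p + q) + 2 * (p * p + p * q + q * q))"
    by (simp add: algebra_simps)
  have "p * p \<le> p" "q * q \<le> q" "p * q \<le> q"
    using assms by (simp_all add: mult_left_le_one_le mult_le_one mult_left_le)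
  then have "1 - 3 * (p + q) + 2 * (p * p + p * q + q * q) \<le> 1"
    using assms by (simp add: algebra_simps)
  then have "(p - q) * (1 - 3 * (p + q) + 2 * (p * p + p * q + q * q)) \<le> (p - q) * 1"
    using assms by (intro mult_left_mono) auto
  then show ?thesis by (simp add: factor)
qed

lemma sum_bernoulli_variance_diff_abs_le:
  fixes p q :: "'a \<Rightarrow> real"
  assumes "\<And>i. i \<in> A \<Longrightarrow> 0 \<le> q i" "\<And>i. i \<in> A \<Longrightarrow> q i \<le> p i" "\<And>i. i \<in> A \<Longrightarrow> p i \<le> 1"
  shows "\<bar>(\<Sum>i\<in>A. p i * (1 - p i)) - (\<Sum>i\<in>A. q i * (1 - q i))\<bar> \<le> (\<Sum>i\<in>A. p i - q i)"
proof -
  have "\<bar>(\<Sum>i\<in>A. p i * (1 - p i)) - (\<Sum>i\<in>A. q i * (1 - q i))\<bar> \<le>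
      (\<Sum>i\<in>A. \<bar>p i * (1 - p i) - q i * (1 - q i)\<bar>)"
    unfolding sum_subtractf[symmetric] by (rule sum_abs)
  also have "\<dots> \<le> (\<Sum>i\<in>A. p i - q i)"
    using assms by (intro sum_mono bernoulli_variance_diff_abs_le)
  finally show ?thesis .
qed

lemma sum_bernoulli_third_cumulant_diff_le:
  fixes p q :: "'a \<Rightarrow> real"
  assumes "\<And>i. i \<in> A \<Longrightarrow> 0 \<le> q i" "\<And>i. i \<in> A \<Longrightarrow> q i \<le> p i" "\<And>i. i \<in> A \<Longrightarrow> p i \<le> 1"
  shows "(\<Sum>i\<in>A. p i * (1 - p i) * (1 - 2 * p i)) - (\<Sum>i\<in>A. q i * (1 - q i) * (1 - 2 * q i))
    \<le> (\<Sum>i\<in>A. p i - q i)"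
  unfolding sum_subtractf[symmetric]
  using assms by (intro sum_mono bernoulli_third_cumulant_diff_le)

lemma moment_difference_bound:
  fixes \<kappa> \<kappa>' s t d :: real
  assumes "0 \<le> d" "0 \<le> s" "\<kappa> - \<kappa>' \<le> d" "\<bar>s - t\<bar> \<le> d"
  shows "(\<kappa> / 3 + s / 2) - ((\<kappa>' - 3 * t * d - d^3) / 3 + (t + d^2) / 2 - d / 6)
    \<le> 2 * d * (s + 1 + d^2)"
proof -
  have "t * d \<le> (s + d) * d" using assms by (intro mult_right_mono) auto
  then have "t * d \<le> s * d + d^2" by (simp add: distrib_right power2_eq_square)
  moreover have "2 * d^2 \<le> d + d^3"
    using mult_nonneg_nonneg[OF assms(1) zero_le_power2[of "d - 1"]]
    by (simp add: algebra_simps power2_eq_square power3_eq_cube)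
  moreover have "0 \<le> s * d" "0 \<le> d^3" using assms by simp_all
  moreover have "s - t \<le> d" using assms(4) by auto
  ultimately have "(\<kappa> - \<kappa>') / 3 + t * d + d^3 / 3 + (s - t) / 2 - d^2 / 2 + d / 6
      \<le> 2 * (s * d) + 2 * d + 2 * d^3"
    using assms(1,3) unfolding diff_divide_distrib by linarith
  then show ?thesis
    by (simp add: field_simps power2_eq_square power3_eq_cube)
qed

theorem lemma8:
  fixes n :: nat and p q :: "nat \<Rightarrow> real"
  assumes "n \<ge> 1"
    and "\<And>i. i < n \<Longrightarrow> 0 \<le> p i \<and> p i \<le> 1"
    and "\<And>i. i < n \<Longrightarrow> 0 \<le> q i \<and> q i \<le> 1"
    and "\<And>i. i < n \<Longrightarrow> q i \<le> p i"
  shows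
    "let X = bern_sum_pmf n p; Y = bern_sum_pmf n q;
         \<sigma>2 = (\<Sum>i<n. p i * (1 - p i));
         m = (\<Sum>i<n. p i);
         \<Delta> = (\<Sum>i<n. p i - q i);
         g = (\<lambda>k::int. measure_pmf.prob X {x. x \<ge> k} - measure_pmf.prob Y {x. x \<ge> k});
         J = (\<Sum>\<^sub>\<infinity>k\<in>(UNIV::int set). (real_of_int k - m)^2 * g k)
     in J \<le> 2 * \<Delta> * (\<sigma>2 + 1 + \<Delta>^2)"
proof -
  define m where "m = (\<Sum>i<n. p i)"
  define \<Delta> where "\<Delta> = (\<Sum>i<n. p i - q i)"
  define \<sigma>2 where "\<sigma>2 = (\<Sum>i<n. p i * (1 - p i))"
  define \<tau>2 where "\<tau>2 = (\<Sum>i<n. q i * (1 - q i))"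
  define \<kappa>3 where "\<kappa>3 = (\<Sum>i<n. p i * (1 - p i) * (1 - 2 * p i))"
  define \<kappa>3' where "\<kappa>3' = (\<Sum>i<n. q i * (1 - q i) * (1 - 2 * q i))"
  define tail where "tail r k = measure_pmf.prob (bern_sum_pmf n r) {x. k \<le> x}" for r k
  have tail_diff_vanishes: "tail p k - tail q k = 0" if "k \<notin> {1..int n}" for k
    using that prob_bern_sum_pmf_atLeast_nonpos prob_bern_sum_pmf_atLeast_gt
    by (cases "k \<le> 0") (auto simp: tail_def)
  have "(\<Sum>\<^sub>\<infinity>k\<in>(UNIV::int set). (real_of_int k - m)^2 * (tail p k - tail q k)) =
      (\<Sum>k\<in>{1..int n}. (real_of_int k - m)^2 * (tail p k - tail q k))"
    by (subst infsum_cong_neutral[where T = "{1..int n}"]) (auto simp: tail_diff_vanishes)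
  also have "\<dots> = measure_pmf.expectation (bern_sum_pmf n p) (\<lambda>x. sum_squares_poly (real_of_int x - m))
      - measure_pmf.expectation (bern_sum_pmf n q) (\<lambda>x. sum_squares_poly (real_of_int x - m))"
    by (simp add: tail_def right_diff_distrib sum_subtractf bern_sum_pmf_weighted_tail_sum)
  also have "\<dots> = (\<kappa>3 / 3 + \<sigma>2 / 2) - ((\<kappa>3' - 3 * \<tau>2 * \<Delta> - \<Delta>^3) / 3 + (\<tau>2 + \<Delta>^2) / 2 - \<Delta> / 6)"
  proof -
    have "(\<Sum>i<n. q i) - m = - \<Delta>" by (simp add: m_def \<Delta>_def sum_subtractf)
    then show ?thesis
      using assms(2,3)
      by (simp add: expectation_sum_squares_poly_bern_sum_pmf m_def[symmetric] \<sigma>2_def \<kappa>3_def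
          \<tau>2_def \<kappa>3'_def)
  qed
  also have "\<dots> \<le> 2 * \<Delta> * (\<sigma>2 + 1 + \<Delta>^2)"
  proof (rule moment_difference_bound)
    show "0 \<le> \<Delta>" "0 \<le> \<sigma>2"
      using assms(2,4) by (auto simp: \<Delta>_def \<sigma>2_def intro!: sum_nonneg)
    show "\<kappa>3 - \<kappa>3' \<le> \<Delta>" "\<bar>\<sigma>2 - \<tau>2\<bar> \<le> \<Delta>"
      unfolding \<kappa>3_def \<kappa>3'_def \<sigma>2_def \<tau>2_def \<Delta>_def
      by (rule sum_bernoulli_third_cumulant_diff_le sum_bernoulli_variance_diff_abs_le;
          use assms(2-4) in auto)+
  qed
  finally show ?thesis
    by (simp add: Let_def tail_def m_def \<Delta>_def \<sigma>2_def)
qed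

end
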